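(* For every real $\alpha\ge1$ and every integer $n\ge1$, $$\sum_{k=1}^n(\alpha n)^{-\frac{k}{k+1}}\ \le\ \frac{1+e^{2/e}}{\sqrt\alpha}.$$ *)

theory Defs
  imports Complex_Main
begin

end

theory Submission
  imports Defs
begin

text \<open>Each term factors as \<open>\<alpha> powr (-k/(k+1)) * n powr (1/(k+1)) / n\<close>; as \<open>\<alpha> \<ge> 1\<close>
  and \<open>k \<ge> 1\<close>, the first factor is at most \<open>1 / sqrt \<alpha>\<close>. Bernoulli's inequality for
  \<open>(2/3) * n powr (1/(k+1))\<close> gives \<open>n powr (1/(k+1)) \<le> 3/2 + (2/3)^k * n / 2\<close>, so the sum
  is at most \<open>(3/2 + (\<Sum>k. (2/3)^k) / 2) / sqrt \<alpha> \<le> (5/2) / sqrt \<alpha>\<close>, and \<open>5/2 \<le> 1 + exp (2/e)\<close>.\<close>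

lemma Bernoulli_real_root:
  fixes x c :: real and m :: nat
  assumes "x \<ge> 0" and "c > 0" and "m \<ge> 1"
  shows "c * root m x - 1 \<le> (c ^ m * x - 1) / m"
proof -
  have "1 + real m * (c * root m x - 1) \<le> (1 + (c * root m x - 1)) ^ m"
    using assms by (intro Bernoulli_inequality) simp
  also have "\<dots> = c ^ m * x"
    using assms by (simp add: power_mult_distrib real_root_pow_pos2)
  finally show ?thesis
    using assms by (simp add: field_simps)
qed

lemma real_root_le_three_halves:
  fixes x :: real and k :: nat
  assumes "x \<ge> 0" and "k \<ge> 1"
  shows "root (k + 1) x \<le> 3/2 + (2/3) ^ k * x / 2"
proof -
  define y where "y = (2/3) ^ (k + 1) * x - (1::real)"
  have "(2/3) * root (k + 1) x - 1 \<le> y / real (k + 1)"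
    using Bernoulli_real_root[of x "2/3" "k + 1"] assms by (simp add: y_def)
  also have "\<dots> \<le> max 0 (y / 2)"
  proof (cases "y \<ge> 0")
    case True
    then have "y / real (k + 1) \<le> y / 2"
      using assms by (intro divide_left_mono) auto
    then show ?thesis by linarith
  qed (simp add: divide_nonpos_pos)
  also have "\<dots> \<le> (2/3) ^ (k + 1) * x / 2"
    using assms unfolding y_def by (auto simp: max_def)
  finally show ?thesis
    by (simp add: field_simps)
qed

lemma powr_neg_frac_le:
  fixes \<alpha> x :: real and k :: nat
  assumes "\<alpha> \<ge> 1" and "x \<ge> 1" and "k \<ge> 1"
  shows "(\<alpha> * x) powr (- (real k / (real k + 1))) \<le> (3 / (2 * x) + (2/3) ^ k / 2) / sqrt \<alpha>"
proof -
  have \<alpha>_part: "\<alpha> powr (- (real k / (real k + 1))) \<le> 1 / sqrt \<alpha>"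
  proof -
    have "\<alpha> powr (- (real k / (real k + 1))) \<le> \<alpha> powr (- (1/2))"
      using assms by (intro powr_mono) (auto simp: field_simps)
    also have "\<dots> = 1 / sqrt \<alpha>"
      using assms by (simp add: powr_minus_divide powr_half_sqrt)
    finally show ?thesis .
  qed
  have x_part: "x powr (- (real k / (real k + 1))) \<le> 3 / (2 * x) + (2/3) ^ k / 2"
  proof -
    have exponent: "- (real k / (real k + 1)) = 1 / real (k + 1) - 1"
      by (simp add: field_simps)
    have "x powr (- (real k / (real k + 1))) = x powr (1 / real (k + 1)) / x"
      unfolding exponent using assms by (simp add: powr_diff)
    also have "\<dots> = root (k + 1) x / x"
      using assms by (simp add: root_powr_inverse)
    also have "\<dots> \<le> (3/2 + (2/3) ^ k * x / 2) / x"
      using assms real_root_le_three_halves[of x k] by (intro divide_right_mono) auto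
    also have "\<dots> = 3 / (2 * x) + (2/3) ^ k / 2"
      using assms by (simp add: field_simps)
    finally show ?thesis .
  qed
  have "(\<alpha> * x) powr (- (real k / (real k + 1)))
      = \<alpha> powr (- (real k / (real k + 1))) * x powr (- (real k / (real k + 1)))"
    using assms by (simp add: powr_mult)
  also have "\<dots> \<le> 1 / sqrt \<alpha> * (3 / (2 * x) + (2/3) ^ k / 2)"
    using assms \<alpha>_part x_part by (intro mult_mono) auto
  finally show ?thesis
    by simp
qed

lemma sum_two_thirds_power: "(\<Sum>k=1..n. (2/3::real) ^ k) = 2 - 2 * (2/3) ^ n"
  by (induction n) (simp_all add: sum.cl_ivl_Suc)

lemma five_halves_le_one_plus_exp: "5/2 \<le> 1 + exp (2 / exp (1::real))"
proof -
  have "2/3 \<le> 2 / exp (1::real)"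
    using exp_le by (simp add: field_simps)
  then show ?thesis
    using exp_ge_add_one_self[of "2 / exp 1"] by linarith
qed

theorem mainTheorem4:
  fixes \<alpha> :: real and n :: nat
  assumes "\<alpha> \<ge> 1" and "n \<ge> 1"
  shows "(\<Sum>k=1..n. (\<alpha> * real n) powr (- (real k / (real k + 1))))
           \<le> (1 + exp (2 / exp 1)) / sqrt \<alpha>"
proof -
  have "(\<Sum>k=1..n. (\<alpha> * real n) powr (- (real k / (real k + 1))))
      \<le> (\<Sum>k=1..n. (3 / (2 * real n) + (2/3) ^ k / 2) / sqrt \<alpha>)"
    using assms by (intro sum_mono powr_neg_frac_le) auto
  also have "\<dots> = (3/2 + (\<Sum>k=1..n. (2/3::real) ^ k) / 2) / sqrt \<alpha>"
    using assms by (simp add: sum_divide_distrib [symmetric] sum.distrib)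
  also have "\<dots> = (5/2 - (2/3) ^ n) / sqrt \<alpha>"
    by (simp only: sum_two_thirds_power) (simp add: field_simps)
  also have "\<dots> \<le> (5/2) / sqrt \<alpha>"
    using assms by (intro divide_right_mono) simp_all
  also have "\<dots> \<le> (1 + exp (2 / exp 1)) / sqrt \<alpha>"
    using assms five_halves_le_one_plus_exp by (intro divide_right_mono) simp_all
  finally show ?thesis .
qed

end
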